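(* Fix $\alpha>\beta>0$ and $\lambda_0,\lambda_1>0$, and let $\rho_0$ be the invariant density described in the context. Then: (1) If $\lambda_0<\alpha+\beta$, then $\rho_0$ is unbounded in every neighborhood of $(0,0)$. (2) If $\lambda_1<\beta$, then for every $x\in\partial\Gamma_0$, $\rho_0$ is unbounded in every neighborhood of $x$; consequently $\rho_0$ is also unbounded in every neighborhood of $(0,0)$ and of $(1,1)$.
   Context: For $i\in\{0,1\}$ let $u_i(x_1,x_2)=(-\alpha(x_1-i),-\beta(x_2-i))$, with flow $\Phi_i^t(x_1,x_2)=(i+(x_1-i)e^{-\alpha t},\, i+(x_2-i)e^{-\beta t})$, $t\in\mathbb{R}$. Let $(I_t)$ be a continuous-time Markov chain on $\{0,1\}$ jumping $0\to1$ at rate $\lambda_0$ and $1\to0$ at rate $\lambda_1$, and let $X_t$ solve $\frac{d}{dt}X_t=u_{I_t}(X_t)$. The Markov process $(X_t,I_t)$ on $\mathbb{R}^2\times\{0,1\}$ has a unique invariant probability measure $\mu$, absolutely continuous with respect to Lebesgue measure times counting measure; for $i\in\{0,1\}$, $\rho_i\in L^1(\mathbb{R}^2)$ denotes the Lebesgue density of the marginal $\mu(\cdot\times\{i\})$ (the invariant densities). Let $\Gamma=\{(x_1,x_2): 0\le x_2\le1,\ x_2^{\alpha/\beta}\le x_1\le 1-(1-x_2)^{\alpha/\beta}\}$ (the support of these marginals) and $\partial\Gamma_0=\{\Phi_0^t(1,1): t>0\}$, the forward $u_0$-trajectory starting at $(1,1)$. Since $\rho_0$ is defined only up to Lebesgue-null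 sets, "$\rho_0$ is bounded on a set $S$" means some representative of $\rho_0$ is bounded on $S$, and "unbounded in every neighborhood of $x$" means that no neighborhood of $x$ has this property. *)

theory Defs
  imports "HOL-Probability.Probability"
begin

text \<open>Modes are encoded as natural numbers 0 and 1; points of R^2 as pairs of reals.\<close>

definition flow :: "real \<Rightarrow> real \<Rightarrow> nat \<Rightarrow> real \<Rightarrow> real \<times> real \<Rightarrow> real \<times> real" where
  "flow \<alpha> \<beta> i t x = (real i + (fst x - real i) * exp (- \<alpha> * t),
                      real i + (snd x - real i) * exp (- \<beta> * t))"

definition rate :: "real \<Rightarrow> real \<Rightarrow> nat \<Rightarrow> real" where
  "rate l0 l1 i = (if i = 0 then l0 else l1)"

definition mode :: "nat \<Rightarrow> nat \<Rightarrow> nat" where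
  "mode i k = (i + k) mod 2"

text \<open>The process is driven by an i.i.d. sequence e of Exp(1) variables: the k-th holding
  time is e k / rate (mode i k), which is Exp(rate) distributed.\<close>
definition hold :: "real \<Rightarrow> real \<Rightarrow> nat \<Rightarrow> (nat \<Rightarrow> real) \<Rightarrow> nat \<Rightarrow> real" where
  "hold l0 l1 i e k = e k / rate l0 l1 (mode i k)"

definition jump_time :: "real \<Rightarrow> real \<Rightarrow> nat \<Rightarrow> (nat \<Rightarrow> real) \<Rightarrow> nat \<Rightarrow> real" where
  "jump_time l0 l1 i e k = (\<Sum>j<k. hold l0 l1 i e j)"

fun jump_pos :: "real \<Rightarrow> real \<Rightarrow> real \<Rightarrow> real \<Rightarrow> real \<times> real \<Rightarrow> nat \<Rightarrow> (nat \<Rightarrow> real)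
    \<Rightarrow> nat \<Rightarrow> real \<times> real" where
  "jump_pos \<alpha> \<beta> l0 l1 x i e 0 = x"
| "jump_pos \<alpha> \<beta> l0 l1 x i e (Suc k) =
     flow \<alpha> \<beta> (mode i k) (hold l0 l1 i e k) (jump_pos \<alpha> \<beta> l0 l1 x i e k)"

definition pdmp_state :: "real \<Rightarrow> real \<Rightarrow> real \<Rightarrow> real \<Rightarrow> real \<Rightarrow> real \<times> real \<Rightarrow> nat
    \<Rightarrow> (nat \<Rightarrow> real) \<Rightarrow> (real \<times> real) \<times> nat" where
  "pdmp_state \<alpha> \<beta> l0 l1 t x i e =
     (let k = (LEAST k. t < jump_time l0 l1 i e (Suc k))
      in (flow \<alpha> \<beta> (mode i k) (t - jump_time l0 l1 i e k) (jump_pos \<alpha> \<beta> l0 l1 x i e k),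
          mode i k))"

definition exp_seq :: "(nat \<Rightarrow> real) measure" where
  "exp_seq = PiM UNIV (\<lambda>_. density lborel (exponential_density 1))"

definition dens :: "((real \<times> real) \<Rightarrow> real) \<Rightarrow> ((real \<times> real) \<Rightarrow> real) \<Rightarrow> nat
    \<Rightarrow> (real \<times> real) \<Rightarrow> real" where
  "dens \<rho>\<^sub>0 \<rho>\<^sub>1 i = (if i = 0 then \<rho>\<^sub>0 else \<rho>\<^sub>1)"

text \<open>(rho0, rho1) are the Lebesgue densities of the marginals mu(. x {0}), mu(. x {1}) of an
  invariant probability measure mu of the process (X_t, I_t): if the initial state is
  mu-distributed, then so is the state at every time t \<ge> 0.\<close>
definition invariant_densities :: "real \<Rightarrow> real \<Rightarrow> real \<Rightarrow> real \<Rightarrow>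
    ((real \<times> real) \<Rightarrow> real) \<Rightarrow> ((real \<times> real) \<Rightarrow> real) \<Rightarrow> bool" where
  "invariant_densities \<alpha> \<beta> l0 l1 \<rho>\<^sub>0 \<rho>\<^sub>1 \<longleftrightarrow>
     \<rho>\<^sub>0 \<in> borel_measurable lborel \<and> \<rho>\<^sub>1 \<in> borel_measurable lborel \<and>
     (\<forall>x. 0 \<le> \<rho>\<^sub>0 x) \<and> (\<forall>x. 0 \<le> \<rho>\<^sub>1 x) \<and>
     integrable lborel \<rho>\<^sub>0 \<and> integrable lborel \<rho>\<^sub>1 \<and>
     (\<integral>x. \<rho>\<^sub>0 x \<partial>lborel) + (\<integral>x. \<rho>\<^sub>1 x \<partial>lborel) = 1 \<and>
     (\<forall>t\<ge>0. \<forall>A\<in>sets borel. \<forall>i\<in>{0,1}.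
        (\<integral>\<^sup>+x. ennreal (dens \<rho>\<^sub>0 \<rho>\<^sub>1 i x) * indicator A x \<partial>lborel) =
        (\<Sum>j\<in>{0,1}. \<integral>\<^sup>+x. ennreal (dens \<rho>\<^sub>0 \<rho>\<^sub>1 j x) *
            emeasure exp_seq {e \<in> space exp_seq. pdmp_state \<alpha> \<beta> l0 l1 t x j e \<in> A \<times> {i}}
          \<partial>lborel))"

text \<open>f is unbounded (even after modification on a null set) in every neighbourhood of x.\<close>
definition unbounded_near :: "((real \<times> real) \<Rightarrow> real) \<Rightarrow> real \<times> real \<Rightarrow> bool" where
  "unbounded_near f x \<longleftrightarrow>
     (\<forall>U. open U \<longrightarrow> x \<in> U \<longrightarrow> \<not> (\<exists>C. AE y in lborel. y \<in> U \<longrightarrow> \<bar>f y\<bar> \<le> C))"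

definition boundary_Gamma0 :: "real \<Rightarrow> real \<Rightarrow> (real \<times> real) set" where
  "boundary_Gamma0 \<alpha> \<beta> = {flow \<alpha> \<beta> 0 t (1, 1) | t. t > 0}"

end

(*
  Invariance of mu says that the rho0-mass of a Borel set A equals the mass that the process,
  started from mu, carries into A x {0} at any time t >= 0.  Some square carries mass m > 0, so
  if from each of its points the process reaches A in mode 0 with probability at least c, then
  c m <= |A| sup_A rho0.

  (1) Staying in mode 0 for time T, which has probability of order exp (-l0 T), the process
  enters a box of area of order exp (-(alpha + beta) T) around the origin; a bound on rho0 near
  the origin would give exp (-l0 T) <~ exp (-(alpha + beta) T) for all large T.

  (2) Staying in mode 1 for time S, which has probability of order exp (-l1 S), brings the
  process within exp (-beta S) of (1, 1); following the mode-0 flow for time about t0 then puts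
  it into a strip of width of order exp (-beta S) around the curve x2 = x1 powr (beta / alpha),
  which contains partial Gamma_0, close to its point at time t0.  A bound on rho0 there would
  give exp (-l1 S) <~ exp (-beta S).  The corners (0, 0) and (1, 1) are limits of points of
  partial Gamma_0.
*)
theory Submission
  imports Defs
begin

section \<open>The driving sequence of exponential clocks\<close>

abbreviation Exp1 :: "real measure" where
  "Exp1 \<equiv> density lborel (exponential_density 1)"

lemma prob_space_Exp1: "prob_space Exp1"
  by (rule prob_space_exponential_density) simp

lemma emeasure_Exp1_greaterThan:
  assumes "0 \<le> a"
  shows "emeasure Exp1 {a<..} = ennreal (exp (- a))"
proof -
  interpret prob_space Exp1 by (rule prob_space_Exp1)
  have "distributed Exp1 lborel (\<lambda>x. x) (exponential_density 1)"
    by (auto simp: distributed_def distr_id2)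
  then have "\<P>(x in Exp1. a < x) = exp (- a * 1)"
    using assms by (rule exponential_distributedD_gt) simp
  moreover have "{x \<in> space Exp1. a < x} = {a<..}" by auto
  ultimately show ?thesis by (simp add: emeasure_eq_measure)
qed

lemma emeasure_Exp1_greaterThanAtMost:
  assumes "0 \<le> a" "a \<le> b"
  shows "emeasure Exp1 {a<..b} = ennreal (exp (- a) - exp (- b))"
proof -
  interpret prob_space Exp1 by (rule prob_space_Exp1)
  have "{a<..b} = {a<..} - {b<..}" by auto
  then show ?thesis
    using assms by (simp add: emeasure_Diff emeasure_Exp1_greaterThan ennreal_minus)
qed

lemma space_exp_seq [simp]: "space exp_seq = UNIV"
  by (simp add: exp_seq_def space_PiM PiE_UNIV_domain)

lemma emeasure_exp_seq_cylinder:
  assumes "finite J" "\<And>k. k \<in> J \<Longrightarrow> X k \<in> sets borel"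
  shows "emeasure exp_seq {e. \<forall>k\<in>J. e k \<in> X k} = (\<Prod>k\<in>J. emeasure Exp1 (X k))"
proof -
  have "{e. \<forall>k\<in>J. e k \<in> X k} = prod_emb UNIV (\<lambda>_. Exp1) J (Pi\<^sub>E J X)"
    by (auto simp: prod_emb_def space_PiM PiE_def extensional_def Pi_def restrict_def)
  then show ?thesis
    using emeasure_PiM_emb[of UNIV "\<lambda>_. Exp1" J X] assms prob_space_Exp1
    by (simp add: exp_seq_def)
qed

lemma measurable_exp_seq_component [measurable]: "(\<lambda>e. e k) \<in> borel_measurable exp_seq"
proof -
  have "(\<lambda>e. e k) \<in> measurable exp_seq Exp1"
    unfolding exp_seq_def by (rule measurable_component_singleton) simp
  then show ?thesis by (simp cong: measurable_cong_sets)
qed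

lemma measurable_flow [measurable]:
  assumes [measurable]: "f \<in> borel_measurable M" "g \<in> borel_measurable M"
  shows "(\<lambda>e. flow a b i (f e) (g e)) \<in> borel_measurable M"
proof -
  have [measurable]: "g \<in> M \<rightarrow>\<^sub>M borel \<Otimes>\<^sub>M borel" using assms(2) by (simp add: borel_prod)
  show ?thesis unfolding flow_def by measurable
qed

lemma measurable_jump_time [measurable]:
  "(\<lambda>e. jump_time l0 l1 i e k) \<in> borel_measurable exp_seq"
  unfolding jump_time_def hold_def by measurable

lemma measurable_jump_pos [measurable]:
  "(\<lambda>e. jump_pos a b l0 l1 x i e k) \<in> borel_measurable exp_seq"
  by (induction k) (auto simp: hold_def)

lemma measurable_pdmp_state [measurable]:
  "(\<lambda>e. pdmp_state a b l0 l1 t x i e) \<in> borel_measurable exp_seq"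
  unfolding pdmp_state_def Let_def
  by (rule measurable_compose_countable[where f = "\<lambda>k e. (flow a b (mode i k)
        (t - jump_time l0 l1 i e k) (jump_pos a b l0 l1 x i e k), mode i k)"]) measurable

lemma sets_pdmp_event [measurable]:
  assumes "A \<in> sets borel"
  shows "{e. pdmp_state a b l0 l1 t x j e \<in> A \<times> {i}} \<in> sets exp_seq"
proof -
  have "A \<times> {i} \<in> sets (borel :: ((real \<times> real) \<times> nat) measure)"
    using assms by (simp add: borel_prod[symmetric])
  then show ?thesis
    using measurable_sets[OF measurable_pdmp_state] by (simp add: vimage_def)
qed

section \<open>Paths with few jumps\<close>

lemma jump_time_0 [simp]: "jump_time l0 l1 i e 0 = 0"
  by (simp add: jump_time_def)

lemma jump_time_Suc:
  "jump_time l0 l1 i e (Suc k) = jump_time l0 l1 i e k + e k / rate l0 l1 (mode i k)"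
  by (simp add: jump_time_def hold_def)

lemma pdmp_state_eq:
  assumes "\<forall>m<k. jump_time l0 l1 i e (Suc m) \<le> t" "t < jump_time l0 l1 i e (Suc k)"
  shows "pdmp_state a b l0 l1 t x i e =
    (flow a b (mode i k) (t - jump_time l0 l1 i e k) (jump_pos a b l0 l1 x i e k), mode i k)"
proof -
  have "(LEAST k. t < jump_time l0 l1 i e (Suc k)) = k"
    by (rule Least_equality) (use assms in \<open>auto simp: not_less[symmetric]\<close>)
  then show ?thesis unfolding pdmp_state_def Let_def by simp
qed

lemma emeasure_pdmp_event_ge_cylinder:
  assumes "finite J" "\<And>k. k \<in> J \<Longrightarrow> X k \<in> sets borel" "A \<in> sets borel"
    and "\<And>e. (\<And>k. k \<in> J \<Longrightarrow> e k \<in> X k) \<Longrightarrow> pdmp_state a b l0 l1 t x j e \<in> A \<times> {i}"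
  shows "(\<Prod>k\<in>J. emeasure Exp1 (X k)) \<le>
    emeasure exp_seq {e. pdmp_state a b l0 l1 t x j e \<in> A \<times> {i}}"
proof -
  have "(\<Prod>k\<in>J. emeasure Exp1 (X k)) = emeasure exp_seq {e. \<forall>k\<in>J. e k \<in> X k}"
    using assms(1,2) by (rule emeasure_exp_seq_cylinder[symmetric])
  also have "\<dots> \<le> emeasure exp_seq {e. pdmp_state a b l0 l1 t x j e \<in> A \<times> {i}}"
    using assms(3,4) by (intro emeasure_mono sets_pdmp_event) auto
  finally show ?thesis .
qed

lemma pdmp_state_from_mode0_no_jump:
  assumes "t < e 0 / l0"
  shows "pdmp_state a b l0 l1 t x 0 e = (flow a b 0 t x, 0)"
  using pdmp_state_eq[of 0 l0 l1 0 e t a b x] assms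
  by (simp add: jump_time_Suc mode_def rate_def)

lemma pdmp_state_from_mode1_one_jump:
  assumes "e 0 / l1 \<le> t" "t < e 0 / l1 + e 1 / l0"
  shows "pdmp_state a b l0 l1 t x 1 e = (flow a b 0 (t - e 0 / l1) (flow a b 1 (e 0 / l1) x), 0)"
  using pdmp_state_eq[of 1 l0 l1 1 e t a b x] assms
  by (simp add: jump_time_Suc mode_def rate_def hold_def)

lemma pdmp_state_from_mode0_two_jumps:
  assumes "0 \<le> e 1 / l1" "e 0 / l0 + e 1 / l1 \<le> t" "t < e 0 / l0 + e 1 / l1 + e 2 / l0"
  shows "pdmp_state a b l0 l1 t x 0 e =
    (flow a b 0 (t - e 0 / l0 - e 1 / l1) (flow a b 1 (e 1 / l1) (flow a b 0 (e 0 / l0) x)), 0)"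
proof -
  have "\<forall>m<2. jump_time l0 l1 0 e (Suc m) \<le> t"
    using assms by (auto simp: less_2_cases_iff jump_time_Suc mode_def rate_def)
  with assms show ?thesis
    using pdmp_state_eq[of 2 l0 l1 0 e t a b x]
    by (simp add: jump_time_Suc mode_def rate_def hold_def numeral_2_eq_2 diff_diff_eq)
qed

section \<open>Invariant densities\<close>

lemma invariant_densitiesD:
  assumes "invariant_densities a b l0 l1 \<rho>\<^sub>0 \<rho>\<^sub>1"
  shows "\<rho>\<^sub>0 \<in> borel_measurable lborel" "\<rho>\<^sub>1 \<in> borel_measurable lborel"
    and "0 \<le> \<rho>\<^sub>0 x" "0 \<le> \<rho>\<^sub>1 x"
    and "(\<integral>\<^sup>+x. ennreal (\<rho>\<^sub>0 x + \<rho>\<^sub>1 x) \<partial>lborel) = 1"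
proof -
  have parts: "\<rho>\<^sub>0 \<in> borel_measurable lborel" "\<rho>\<^sub>1 \<in> borel_measurable lborel"
    "\<forall>x. 0 \<le> \<rho>\<^sub>0 x" "\<forall>x. 0 \<le> \<rho>\<^sub>1 x" "integrable lborel \<rho>\<^sub>0" "integrable lborel \<rho>\<^sub>1"
    "(\<integral>x. \<rho>\<^sub>0 x \<partial>lborel) + (\<integral>x. \<rho>\<^sub>1 x \<partial>lborel) = 1"
    using assms unfolding invariant_densities_def by - (elim conjE; assumption)+
  then show "\<rho>\<^sub>0 \<in> borel_measurable lborel" "\<rho>\<^sub>1 \<in> borel_measurable lborel"
    "0 \<le> \<rho>\<^sub>0 x" "0 \<le> \<rho>\<^sub>1 x"
    by blast+
  show "(\<integral>\<^sup>+x. ennreal (\<rho>\<^sub>0 x + \<rho>\<^sub>1 x) \<partial>lborel) = 1"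
    using parts by (subst nn_integral_eq_integral) auto
qed

lemma invariant_densities_balance:
  assumes "invariant_densities a b l0 l1 \<rho>\<^sub>0 \<rho>\<^sub>1" "0 \<le> t" "A \<in> sets borel"
  shows "(\<integral>\<^sup>+x. ennreal (\<rho>\<^sub>0 x) * indicator A x \<partial>lborel) =
    (\<integral>\<^sup>+x. ennreal (\<rho>\<^sub>0 x) * emeasure exp_seq {e. pdmp_state a b l0 l1 t x 0 e \<in> A \<times> {0}} \<partial>lborel) +
    (\<integral>\<^sup>+x. ennreal (\<rho>\<^sub>1 x) * emeasure exp_seq {e. pdmp_state a b l0 l1 t x 1 e \<in> A \<times> {0}} \<partial>lborel)"
  using assms unfolding invariant_densities_def by (auto simp: dens_def)

definition square :: "real \<Rightarrow> (real \<times> real) set" where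
  "square R = {-R..R} \<times> {-R..R}"

lemma mem_square: "x \<in> square R \<longleftrightarrow> \<bar>fst x\<bar> \<le> R \<and> \<bar>snd x\<bar> \<le> R"
  by (cases x) (auto simp: square_def)

lemma sets_centered_rectangle [measurable]: "{-p..p} \<times> {-q..q} \<in> sets (borel :: (real \<times> real) measure)"
  by (intro borel_closed closed_Times) auto

lemma sets_square [measurable]: "square R \<in> sets borel"
  unfolding square_def by (rule sets_centered_rectangle)

lemma emeasure_centered_rectangle:
  assumes "0 \<le> p" "0 \<le> q"
  shows "emeasure lborel ({-p..p} \<times> {-q..q}) = ennreal (4 * p * q)"
proof -
  have "emeasure lborel ({-p..p} \<times> {-q..q}) = emeasure lborel {-p..p} * emeasure lborel {-q..q}"
    by (simp add: lborel_prod[symmetric] lborel.emeasure_pair_measure_Times)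
  also have "\<dots> = ennreal (4 * p * q)"
    using assms by (simp add: ennreal_mult[symmetric])
  finally show ?thesis .
qed

lemma invariant_densities_mass_in_square:
  assumes "invariant_densities a b l0 l1 \<rho>\<^sub>0 \<rho>\<^sub>1"
  obtains R m where "1 \<le> R" "0 < m"
    "ennreal m \<le> (\<integral>\<^sup>+x. ennreal (\<rho>\<^sub>0 x + \<rho>\<^sub>1 x) * indicator (square R) x \<partial>lborel)"
proof -
  note [measurable] = invariant_densitiesD(1,2)[OF assms]
  define \<nu> where "\<nu> = density lborel (\<lambda>x. ennreal (\<rho>\<^sub>0 x + \<rho>\<^sub>1 x))"
  have \<nu>: "emeasure \<nu> A = (\<integral>\<^sup>+x. ennreal (\<rho>\<^sub>0 x + \<rho>\<^sub>1 x) * indicator A x \<partial>lborel)"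
    if "A \<in> sets borel" for A
    using that by (simp add: \<nu>_def emeasure_density mult.commute)
  have "(\<Union>n. square (Suc n)) = UNIV"
  proof safe
    fix x :: "real \<times> real"
    obtain n :: nat where "max \<bar>fst x\<bar> \<bar>snd x\<bar> \<le> n" using real_arch_simple by blast
    then show "x \<in> (\<Union>n. square (Suc n))" by (auto simp: mem_square intro!: exI[of _ n])
  qed auto
  moreover have "incseq (\<lambda>n. square (Suc n))"
    by (rule incseq_SucI) (auto simp: square_def)
  ultimately have "(SUP n. emeasure \<nu> (square (Suc n))) = emeasure \<nu> UNIV"
    by (subst SUP_emeasure_incseq) (auto simp: \<nu>_def)
  also have "\<dots> = 1"
    using invariant_densitiesD(5)[OF assms] by (simp add: \<nu>)
  finally have "ennreal (1 / 2) < (SUP n. emeasure \<nu> (square (Suc n)))"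
    using ennreal_lessI[of 1 "1 / 2"] by simp
  then obtain n where "ennreal (1 / 2) < emeasure \<nu> (square (Suc n))"
    by (auto simp: less_SUP_iff)
  then show ?thesis
    by (intro that[of "Suc n" "1 / 2"]) (auto simp: \<nu>)
qed

lemma invariant_densities_hitting_bound:
  assumes inv: "invariant_densities a b l0 l1 \<rho>\<^sub>0 \<rho>\<^sub>1" and "0 \<le> t"
    and A: "A \<in> sets borel" and K: "K \<in> sets borel"
    and hit: "\<And>x j. x \<in> K \<Longrightarrow> j \<in> {0, 1} \<Longrightarrow>
      ennreal c \<le> emeasure exp_seq {e. pdmp_state a b l0 l1 t x j e \<in> A \<times> {0}}"
  shows "ennreal c * (\<integral>\<^sup>+x. ennreal (\<rho>\<^sub>0 x + \<rho>\<^sub>1 x) * indicator K x \<partial>lborel)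
    \<le> (\<integral>\<^sup>+x. ennreal (\<rho>\<^sub>0 x) * indicator A x \<partial>lborel)"
proof -
  note [measurable] = invariant_densitiesD(1,2)[OF inv]
  let ?P = "\<lambda>j x. emeasure exp_seq {e. pdmp_state a b l0 l1 t x j e \<in> A \<times> {0}}"
  have "ennreal c * (\<integral>\<^sup>+x. ennreal (\<rho>\<^sub>0 x + \<rho>\<^sub>1 x) * indicator K x \<partial>lborel)
      = (\<integral>\<^sup>+x. ennreal (\<rho>\<^sub>0 x) * (ennreal c * indicator K x) \<partial>lborel)
        + (\<integral>\<^sup>+x. ennreal (\<rho>\<^sub>1 x) * (ennreal c * indicator K x) \<partial>lborel)"
    using K invariant_densitiesD(3,4)[OF inv]
    by (simp add: nn_integral_cmult[symmetric] nn_integral_add[symmetric] ennreal_plus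
        algebra_simps)
  also have "\<dots> \<le> (\<integral>\<^sup>+x. ennreal (\<rho>\<^sub>0 x) * ?P 0 x \<partial>lborel) + (\<integral>\<^sup>+x. ennreal (\<rho>\<^sub>1 x) * ?P 1 x \<partial>lborel)"
    by (intro add_mono nn_integral_mono mult_left_mono) (auto simp: indicator_def hit)
  also have "\<dots> = (\<integral>\<^sup>+x. ennreal (\<rho>\<^sub>0 x) * indicator A x \<partial>lborel)"
    by (rule invariant_densities_balance[symmetric, OF inv \<open>0 \<le> t\<close> A])
  finally show ?thesis .
qed

lemma nn_integral_indicator_le_of_AE_bound:
  assumes "AE y in lborel. y \<in> U \<longrightarrow> \<bar>f y\<bar> \<le> C" "A \<subseteq> U" "A \<in> sets borel"
  shows "(\<integral>\<^sup>+x. ennreal (f x) * indicator A x \<partial>lborel) \<le> ennreal C * emeasure lborel A"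
proof -
  have "(\<integral>\<^sup>+x. ennreal (f x) * indicator A x \<partial>lborel) \<le> (\<integral>\<^sup>+x. ennreal C * indicator A x \<partial>lborel)"
    using assms(1) by (intro nn_integral_mono_AE, eventually_elim)
      (use assms(2) in \<open>auto simp: indicator_def intro: ennreal_leI\<close>)
  also have "\<dots> = ennreal C * emeasure lborel A"
    using assms(3) by (simp add: nn_integral_cmult_indicator)
  finally show ?thesis .
qed

lemma invariant_densities_mass_transfer:
  assumes inv: "invariant_densities a b l0 l1 \<rho>\<^sub>0 \<rho>\<^sub>1" and "0 \<le> t"
    and bound: "AE y in lborel. y \<in> U \<longrightarrow> \<bar>\<rho>\<^sub>0 y\<bar> \<le> C" "0 \<le> C"
    and A: "A \<in> sets borel" "A \<subseteq> U" "emeasure lborel A \<le> ennreal v" "0 \<le> v"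
    and m: "ennreal m \<le> (\<integral>\<^sup>+x. ennreal (\<rho>\<^sub>0 x + \<rho>\<^sub>1 x) * indicator (square R) x \<partial>lborel)"
    and hit: "\<And>x j. x \<in> square R \<Longrightarrow> j \<in> {0, 1} \<Longrightarrow>
      ennreal c \<le> emeasure exp_seq {e. pdmp_state a b l0 l1 t x j e \<in> A \<times> {0}}"
    and "0 \<le> c" "0 \<le> m"
  shows "c * m \<le> C * v"
proof -
  have "ennreal (c * m) \<le> ennreal c * (\<integral>\<^sup>+x. ennreal (\<rho>\<^sub>0 x + \<rho>\<^sub>1 x) * indicator (square R) x \<partial>lborel)"
    using m \<open>0 \<le> c\<close> \<open>0 \<le> m\<close> by (simp add: ennreal_mult mult_left_mono)
  also have "\<dots> \<le> (\<integral>\<^sup>+x. ennreal (\<rho>\<^sub>0 x) * indicator A x \<partial>lborel)"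
    using inv \<open>0 \<le> t\<close> A(1) sets_square hit by (rule invariant_densities_hitting_bound)
  also have "\<dots> \<le> ennreal C * emeasure lborel A"
    using bound(1) A(2,1) by (rule nn_integral_indicator_le_of_AE_bound)
  also have "\<dots> \<le> ennreal (C * v)"
    using A(3) bound(2) by (subst ennreal_mult') (auto intro: mult_left_mono)
  finally show ?thesis
    using bound(2) A(4) by (simp add: ennreal_le_iff)
qed

section \<open>Geometry of the two flows\<close>

lemma dist_Pair_le_abs_sum: "dist (x1, x2) (y1, y2) \<le> \<bar>x1 - y1\<bar> + \<bar>x2 - (y2 :: real)\<bar>"
  using norm_Pair_le[of "x1 - y1" "x2 - y2"] by (simp add: dist_norm)

lemma exp_neg_mult_diff_le:
  fixes c s t :: real
  assumes "0 \<le> c" "0 \<le> t" "t \<le> s"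
  shows "exp (- c * t) - exp (- c * s) \<le> c * (s - t)"
proof -
  have "exp (- c * t) - exp (- c * s) = exp (- c * t) * (1 - exp (- (c * (s - t))))"
    by (simp add: algebra_simps flip: exp_add)
  also have "\<dots> \<le> 1 * (c * (s - t))"
    using assms exp_ge_add_one_self[of "- (c * (s - t))"] by (intro mult_mono) auto
  finally show ?thesis by simp
qed

lemma flow_in_square:
  assumes "0 \<le> a" "0 \<le> b" "0 \<le> t" "1 \<le> R" "i \<in> {0, 1}" "x \<in> square R"
  shows "flow a b i t x \<in> square R"
proof -
  have convex: "\<bar>real i + (y - real i) * \<theta>\<bar> \<le> R" if "\<bar>y\<bar> \<le> R" "0 \<le> \<theta>" "\<theta> \<le> 1" for y \<theta>
  proof -
    have "\<bar>real i + (y - real i) * \<theta>\<bar> = \<bar>(1 - \<theta>) * real i + \<theta> * y\<bar>"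
      by (simp add: algebra_simps)
    also have "\<dots> \<le> (1 - \<theta>) * R + \<theta> * R"
      using that assms(4,5) by (intro order_trans[OF abs_triangle_ineq] add_mono)
        (auto simp: abs_mult intro: mult_left_mono)
    finally show ?thesis by (simp add: algebra_simps)
  qed
  show ?thesis
    using assms convex[of "fst x" "exp (- a * t)"] convex[of "snd x" "exp (- b * t)"]
    by (simp add: flow_def mem_square)
qed

lemma flow0_in_centered_rectangle:
  assumes "0 \<le> a" "0 \<le> b" "x \<in> square R" "T \<le> s"
  shows "flow a b 0 s x \<in> {- (R * exp (- a * T)) .. R * exp (- a * T)} \<times> {- (R * exp (- b * T)) .. R * exp (- b * T)}"
proof -
  have "y * exp (- c * s) \<in> {- (R * exp (- c * T)) .. R * exp (- c * T)}" if "\<bar>y\<bar> \<le> R" "0 \<le> c" for y c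
  proof -
    have "\<bar>y * exp (- c * s)\<bar> \<le> R * exp (- c * T)"
      unfolding abs_mult using that assms(4) by (intro mult_mono) (auto simp: mult_left_mono)
    then show ?thesis by (simp add: abs_le_iff)
  qed
  then show ?thesis
    using assms(1-3) unfolding mem_Times_iff by (simp add: flow_def mem_square)
qed

text \<open>For \<open>g = \<beta> / \<alpha>\<close> the graph of \<open>x \<mapsto> x powr g\<close> contains \<open>\<partial>\<Gamma>\<^sub>0\<close>, since
  \<open>exp (- \<alpha> t) powr (\<beta> / \<alpha>) = exp (- \<beta> t)\<close>.\<close>
definition power_strip :: "real \<Rightarrow> real \<Rightarrow> (real \<times> real) set" where
  "power_strip g w = {y. 0 \<le> fst y \<and> fst y \<le> 2 \<and> \<bar>snd y - fst y powr g\<bar> \<le> w}"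

lemma sets_power_strip [measurable]: "power_strip g w \<in> sets borel"
proof -
  have "power_strip g w = {y \<in> space (borel \<Otimes>\<^sub>M borel). 0 \<le> fst y \<and> fst y \<le> 2 \<and> \<bar>snd y - fst y powr g\<bar> \<le> w}"
    by (simp add: power_strip_def space_pair_measure)
  also have "\<dots> \<in> sets (borel \<Otimes>\<^sub>M borel)" by measurable
  finally show ?thesis by (simp only: borel_prod)
qed

lemma emeasure_power_strip:
  assumes "0 \<le> w"
  shows "emeasure lborel (power_strip g w) \<le> ennreal (4 * w)"
proof -
  have slice: "Pair x -` power_strip g w = (if x \<in> {0..2} then {x powr g - w .. x powr g + w} else {})" for x
    by (auto simp: power_strip_def)
  have "emeasure lborel (power_strip g w) = (\<integral>\<^sup>+x. emeasure lborel (Pair x -` power_strip g w) \<partial>lborel)"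
    using lborel.emeasure_pair_measure_alt[of "power_strip g w" lborel]
    by (simp only: lborel_prod sets_lborel sets_power_strip)
  also have "\<dots> = (\<integral>\<^sup>+x. ennreal (2 * w) * indicator {0..2::real} x \<partial>lborel)"
    using assms by (intro nn_integral_cong) (simp add: slice)
  also have "\<dots> = ennreal (4 * w)"
    using assms by (simp add: nn_integral_cmult_indicator flip: ennreal_mult ennreal_numeral)
  finally show ?thesis by simp
qed

lemma flow1_near_corner:
  assumes "0 \<le> b" "b \<le> a" "x \<in> square R" "0 \<le> d"
  shows "\<bar>1 - fst (flow a b 1 d x)\<bar> \<le> (R + 1) * exp (- b * d)"
    and "\<bar>1 - snd (flow a b 1 d x)\<bar> \<le> (R + 1) * exp (- b * d)"
proof -
  have "\<bar>(1 - y) * exp (- c * d)\<bar> \<le> (R + 1) * exp (- b * d)" if "\<bar>y\<bar> \<le> R" "b \<le> c" for y c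
    unfolding abs_mult using that assms(4) by (intro mult_mono) (auto simp: mult_right_mono)
  then show "\<bar>1 - fst (flow a b 1 d x)\<bar> \<le> (R + 1) * exp (- b * d)"
    and "\<bar>1 - snd (flow a b 1 d x)\<bar> \<le> (R + 1) * exp (- b * d)"
    using assms(2,3) by (simp_all add: flow_def mem_square algebra_simps)
qed

lemma abs_one_minus_powr_le:
  fixes x g :: real
  assumes "0 < x" "0 \<le> g" "g \<le> 1"
  shows "\<bar>1 - x powr g\<bar> \<le> \<bar>1 - x\<bar>"
proof (cases "1 \<le> x")
  case True
  then have "1 \<le> x powr g" "x powr g \<le> x powr 1"
    using assms powr_mono[of g 1 x] by (auto intro: ge_one_powr_ge_zero)
  then show ?thesis using assms by simp
next
  case False
  then have "x powr g \<le> 1" "x powr 1 \<le> x powr g"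
    using assms powr_mono2[of g x 1] powr_mono'[of g 1 x] by auto
  then show ?thesis using assms False by simp
qed

lemma flow0_near_corner_in_power_strip:
  assumes "0 < b" "b \<le> a" "\<bar>1 - fst z\<bar> \<le> \<eta>" "\<bar>1 - snd z\<bar> \<le> \<eta>" "\<eta> \<le> 1 / 2" "0 \<le> s"
  shows "flow a b 0 s z \<in> power_strip (b / a) (2 * \<eta>)"
proof -
  have z: "0 < fst z" "fst z \<le> 2" using assms(3,5) by auto
  have "exp (- a * s) powr (b / a) = exp (- b * s)"
    using assms(1,2) by (simp add: powr_def)
  then have "\<bar>snd z * exp (- b * s) - (fst z * exp (- a * s)) powr (b / a)\<bar>
      = \<bar>snd z - fst z powr (b / a)\<bar> * exp (- b * s)"
    using z by (simp add: powr_mult abs_mult flip: left_diff_distrib)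
  also have "\<dots> \<le> \<bar>snd z - fst z powr (b / a)\<bar>"
    using assms(1,6) by (intro mult_left_le) auto
  also have "\<dots> \<le> 2 * \<eta>"
    using abs_one_minus_powr_le[of "fst z" "b / a"] z assms by simp
  finally have "\<bar>snd z * exp (- b * s) - (fst z * exp (- a * s)) powr (b / a)\<bar> \<le> 2 * \<eta>" .
  moreover have "fst z * exp (- a * s) \<le> 2 * 1"
    using z assms(1,2,6) by (intro mult_mono) auto
  ultimately show ?thesis
    using z unfolding power_strip_def flow_def by simp
qed

lemma dist_flow0_near_corner_boundary_Gamma0:
  assumes "0 \<le> b" "b \<le> a" "\<bar>1 - fst z\<bar> \<le> \<eta>" "\<bar>1 - snd z\<bar> \<le> \<eta>" "0 \<le> t" "t \<le> s"
  shows "dist (flow a b 0 s z) (flow a b 0 t (1, 1)) \<le> 2 * (\<eta> + a * (s - t))"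
proof -
  have coord: "\<bar>y * exp (- c * s) - exp (- c * t)\<bar> \<le> \<eta> + a * (s - t)"
    if "\<bar>1 - y\<bar> \<le> \<eta>" "0 \<le> c" "c \<le> a" for y c
  proof -
    have "\<bar>(y - 1) * exp (- c * s)\<bar> \<le> \<eta>"
      using that assms(5,6) mult_mono[of "\<bar>y - 1\<bar>" \<eta> "exp (- c * s)" 1]
      by (simp add: abs_mult abs_minus_commute)
    moreover have "0 \<le> exp (- c * t) - exp (- c * s)"
      using that assms(6) by (simp add: mult_left_mono)
    moreover have "c * (s - t) \<le> a * (s - t)"
      using that assms(6) by (intro mult_right_mono) auto
    moreover have "y * exp (- c * s) - exp (- c * t)
        = (y - 1) * exp (- c * s) - (exp (- c * t) - exp (- c * s))"
      by (simp add: algebra_simps)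
    ultimately show ?thesis
      using exp_neg_mult_diff_le[of c t s] that assms(5,6) unfolding abs_le_iff by linarith
  qed
  show ?thesis
    using dist_Pair_le_abs_sum[of "fst z * exp (- a * s)" "snd z * exp (- b * s)" "exp (- a * t)" "exp (- b * t)"]
      coord[of "fst z" a] coord[of "snd z" b] assms
    by (simp add: flow_def)
qed

lemma flow1_flow0_near_boundary_Gamma0:
  assumes "0 < b" "b \<le> a" "w \<in> square R" "0 \<le> d" "(R + 1) * exp (- b * d) \<le> \<eta>" "\<eta> \<le> 1 / 2"
    and "0 \<le> t0" "t0 \<le> \<sigma>"
  shows "flow a b 0 \<sigma> (flow a b 1 d w) \<in> power_strip (b / a) (2 * \<eta>)"
    and "dist (flow a b 0 \<sigma> (flow a b 1 d w)) (flow a b 0 t0 (1, 1)) \<le> 2 * (\<eta> + a * (\<sigma> - t0))"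
proof -
  have "\<bar>1 - fst (flow a b 1 d w)\<bar> \<le> \<eta>" "\<bar>1 - snd (flow a b 1 d w)\<bar> \<le> \<eta>"
    using flow1_near_corner[of b a w R d] assms(1-5) by auto
  then show "flow a b 0 \<sigma> (flow a b 1 d w) \<in> power_strip (b / a) (2 * \<eta>)"
    and "dist (flow a b 0 \<sigma> (flow a b 1 d w)) (flow a b 0 t0 (1, 1)) \<le> 2 * (\<eta> + a * (\<sigma> - t0))"
    using assms(1,2,6-8) by (intro flow0_near_corner_in_power_strip dist_flow0_near_corner_boundary_Gamma0;
        auto)+
qed

lemma centered_rectangle_subset_ball:
  assumes "p + q < \<epsilon>"
  shows "{-p..p} \<times> {-q..q} \<subseteq> ball (0, 0) \<epsilon>"
proof
  fix y :: "real \<times> real" assume "y \<in> {-p..p} \<times> {-q..q}"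
  then have "dist (0, 0) y \<le> p + q"
    using dist_Pair_le_abs_sum[of 0 0 "fst y" "snd y"] by auto
  with assms show "y \<in> ball (0, 0) \<epsilon>" by simp
qed

section \<open>Probabilities of reaching target sets\<close>

lemma pdmp_reaches_after_long_mode0:
  assumes "0 \<le> a" "0 \<le> b" "0 < l0" "0 < l1" "1 \<le> R" "0 \<le> T"
    and "x \<in> square R" "j \<in> {0, 1}" "A \<in> sets borel"
    and reach: "\<And>s w. w \<in> square R \<Longrightarrow> T \<le> s \<Longrightarrow> flow a b 0 s w \<in> A"
  shows "ennreal ((1 - exp (- l1)) * exp (- l0 * (T + 1)))
    \<le> emeasure exp_seq {e. pdmp_state a b l0 l1 (T + 1) x j e \<in> A \<times> {0}}"
proof (cases "j = 0")
  case True
  have "ennreal ((1 - exp (- l1)) * exp (- l0 * (T + 1))) \<le> (\<Prod>k\<in>{0::nat}. emeasure Exp1 {l0 * (T + 1)<..})"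
    using assms(3,4,6) by (simp add: emeasure_Exp1_greaterThan mult_left_le_one_le)
  also have "\<dots> \<le> emeasure exp_seq {e. pdmp_state a b l0 l1 (T + 1) x j e \<in> A \<times> {0}}"
    using True assms(3,7,9)
    by (intro emeasure_pdmp_event_ge_cylinder)
      (auto simp: pdmp_state_from_mode0_no_jump field_simps intro: reach)
  finally show ?thesis .
next
  case False
  define X where "X k = (if k = 0 then {0<..l1} else {l0 * (T + 1)<..})" for k :: nat
  have "ennreal ((1 - exp (- l1)) * exp (- l0 * (T + 1))) = (\<Prod>k\<in>{0, 1}. emeasure Exp1 (X k))"
    using assms(3,4,6)
    by (simp add: X_def emeasure_Exp1_greaterThan emeasure_Exp1_greaterThanAtMost ennreal_mult)
  also have "\<dots> \<le> emeasure exp_seq {e. pdmp_state a b l0 l1 (T + 1) x j e \<in> A \<times> {0}}"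
  proof (rule emeasure_pdmp_event_ge_cylinder)
    fix e assume e: "\<And>k. k \<in> {0, 1} \<Longrightarrow> e k \<in> X k"
    have "e 0 \<in> {0<..l1}" "e 1 \<in> {l0 * (T + 1)<..}"
      using e[of 0] e[of 1] by (simp_all add: X_def)
    then have "0 < e 0 / l1" "e 0 / l1 \<le> 1" "T + 1 < e 1 / l0"
      using assms(3,4) by (auto simp: field_simps)
    then have "pdmp_state a b l0 l1 (T + 1) x 1 e
        = (flow a b 0 (T + 1 - e 0 / l1) (flow a b 1 (e 0 / l1) x), 0)"
      using assms(6) by (intro pdmp_state_from_mode1_one_jump) auto
    moreover have "flow a b 1 (e 0 / l1) x \<in> square R"
      using assms \<open>0 < e 0 / l1\<close> by (intro flow_in_square) auto
    ultimately show "pdmp_state a b l0 l1 (T + 1) x j e \<in> A \<times> {0}"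
      using False assms(8) \<open>e 0 / l1 \<le> 1\<close> by (auto intro: reach)
  qed (use assms(9) in \<open>auto simp: X_def\<close>)
  finally show ?thesis .
qed

lemma emeasure_Exp1_window:
  assumes "0 < l" "0 \<le> \<delta>" "\<delta> \<le> S"
  shows "emeasure Exp1 {l * (S - \<delta>)<..l * (S - \<delta> / 2)} = ennreal ((exp (l * \<delta>) - exp (l * \<delta> / 2)) * exp (- l * S))"
  using assms by (simp add: emeasure_Exp1_greaterThanAtMost algebra_simps flip: exp_add)

lemma pdmp_from_mode1_reaches_after_long_mode1:
  assumes "0 < l0" "0 < l1" "0 < \<delta>" "\<delta> \<le> S" "0 \<le> t0" "A \<in> sets borel"
    and reach: "\<And>\<sigma> d. S - \<delta> \<le> d \<Longrightarrow> t0 \<le> \<sigma> \<Longrightarrow> \<sigma> \<le> t0 + \<delta> \<Longrightarrow> flow a b 0 \<sigma> (flow a b 1 d x) \<in> A"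
  shows "ennreal ((exp (l1 * \<delta>) - exp (l1 * \<delta> / 2)) * exp (- l0 * (t0 + \<delta>)) * exp (- l1 * S))
    \<le> emeasure exp_seq {e. pdmp_state a b l0 l1 (S + t0) x 1 e \<in> A \<times> {0}}"
proof -
  define X where "X k = (if k = 0 then {l1 * (S - \<delta>)<..l1 * (S - \<delta> / 2)} else {l0 * (t0 + \<delta>)<..})"
    for k :: nat
  have "ennreal ((exp (l1 * \<delta>) - exp (l1 * \<delta> / 2)) * exp (- l0 * (t0 + \<delta>)) * exp (- l1 * S))
      = (\<Prod>k\<in>{0, 1}. emeasure Exp1 (X k))"
    using assms(1-5) by (simp add: X_def emeasure_Exp1_window emeasure_Exp1_greaterThan ennreal_mult mult_ac)
  also have "\<dots> \<le> emeasure exp_seq {e. pdmp_state a b l0 l1 (S + t0) x 1 e \<in> A \<times> {0}}"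
  proof (rule emeasure_pdmp_event_ge_cylinder)
    fix e assume e: "\<And>k. k \<in> {0, 1} \<Longrightarrow> e k \<in> X k"
    have d: "S - \<delta> < e 0 / l1" "e 0 / l1 \<le> S - \<delta> / 2" and "t0 + \<delta> < e 1 / l0"
      using e[of 0] e[of 1] assms(1,2) by (auto simp: X_def field_simps)
    then have "pdmp_state a b l0 l1 (S + t0) x 1 e
        = (flow a b 0 (S + t0 - e 0 / l1) (flow a b 1 (e 0 / l1) x), 0)"
      using assms(3,5) by (intro pdmp_state_from_mode1_one_jump) auto
    moreover have "flow a b 0 (S + t0 - e 0 / l1) (flow a b 1 (e 0 / l1) x) \<in> A"
      by (rule reach) (use d assms(3) in auto)
    ultimately show "pdmp_state a b l0 l1 (S + t0) x 1 e \<in> A \<times> {0}"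
      by simp
  qed (use assms(6) in \<open>auto simp: X_def\<close>)
  finally show ?thesis .
qed

lemma pdmp_from_mode0_reaches_after_long_mode1:
  assumes "0 \<le> a" "0 \<le> b" "0 < l0" "0 < l1" "1 \<le> R" "0 < \<delta>" "\<delta> \<le> S" "0 \<le> t0"
    and "x \<in> square R" "A \<in> sets borel"
    and reach: "\<And>\<sigma> d w. w \<in> square R \<Longrightarrow> S - \<delta> \<le> d \<Longrightarrow> t0 \<le> \<sigma> \<Longrightarrow> \<sigma> \<le> t0 + \<delta> \<Longrightarrow>
      flow a b 0 \<sigma> (flow a b 1 d w) \<in> A"
  shows "ennreal ((1 - exp (- l0 * \<delta> / 2)) * (exp (l1 * \<delta>) - exp (l1 * \<delta> / 2))
      * exp (- l0 * (t0 + \<delta>)) * exp (- l1 * S))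
    \<le> emeasure exp_seq {e. pdmp_state a b l0 l1 (S + t0) x 0 e \<in> A \<times> {0}}"
proof -
  define X where "X k = (if k = 0 then {0<..l0 * \<delta> / 2}
    else if k = 1 then {l1 * (S - \<delta>)<..l1 * (S - \<delta> / 2)} else {l0 * (t0 + \<delta>)<..})" for k :: nat
  have "ennreal ((1 - exp (- l0 * \<delta> / 2)) * (exp (l1 * \<delta>) - exp (l1 * \<delta> / 2))
      * exp (- l0 * (t0 + \<delta>)) * exp (- l1 * S)) = (\<Prod>k\<in>{0, 1, 2}. emeasure Exp1 (X k))"
    using assms(3,4,6,7,8)
    by (simp add: X_def emeasure_Exp1_window emeasure_Exp1_greaterThan ennreal_mult mult_ac,
        simp add: emeasure_Exp1_greaterThanAtMost mult_ac)
  also have "\<dots> \<le> emeasure exp_seq {e. pdmp_state a b l0 l1 (S + t0) x 0 e \<in> A \<times> {0}}"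
  proof (rule emeasure_pdmp_event_ge_cylinder)
    fix e assume e: "\<And>k. k \<in> {0, 1, 2} \<Longrightarrow> e k \<in> X k"
    have t1: "0 < e 0 / l0" "e 0 / l0 \<le> \<delta> / 2"
      and d: "S - \<delta> < e 1 / l1" "e 1 / l1 \<le> S - \<delta> / 2" and "t0 + \<delta> < e 2 / l0"
      using e[of 0] e[of 1] e[of 2] assms(3,4) by (auto simp: X_def field_simps)
    then have "pdmp_state a b l0 l1 (S + t0) x 0 e = (flow a b 0 (S + t0 - e 0 / l0 - e 1 / l1)
        (flow a b 1 (e 1 / l1) (flow a b 0 (e 0 / l0) x)), 0)"
      using assms(7,8) by (intro pdmp_state_from_mode0_two_jumps) linarith+
    moreover have "flow a b 0 (e 0 / l0) x \<in> square R"
      using assms t1 by (intro flow_in_square) auto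
    then have "flow a b 0 (S + t0 - e 0 / l0 - e 1 / l1) (flow a b 1 (e 1 / l1) (flow a b 0 (e 0 / l0) x)) \<in> A"
      by (rule reach) (use t1 d in linarith)+
    ultimately show "pdmp_state a b l0 l1 (S + t0) x 0 e \<in> A \<times> {0}"
      by simp
  qed (use assms(10) in \<open>auto simp: X_def\<close>)
  finally show ?thesis .
qed

lemma pdmp_reaches_after_long_mode1:
  assumes "0 \<le> a" "0 \<le> b" "0 < l0" "0 < l1" "1 \<le> R" "0 < \<delta>" "\<delta> \<le> S" "0 \<le> t0"
    and "x \<in> square R" "j \<in> {0, 1}" "A \<in> sets borel"
    and reach: "\<And>\<sigma> d w. w \<in> square R \<Longrightarrow> S - \<delta> \<le> d \<Longrightarrow> t0 \<le> \<sigma> \<Longrightarrow> \<sigma> \<le> t0 + \<delta> \<Longrightarrow>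
      flow a b 0 \<sigma> (flow a b 1 d w) \<in> A"
  shows "ennreal ((1 - exp (- l0 * \<delta> / 2)) * (exp (l1 * \<delta>) - exp (l1 * \<delta> / 2))
      * exp (- l0 * (t0 + \<delta>)) * exp (- l1 * S))
    \<le> emeasure exp_seq {e. pdmp_state a b l0 l1 (S + t0) x j e \<in> A \<times> {0}}"
proof (cases "j = 0")
  case True
  then show ?thesis
    using pdmp_from_mode0_reaches_after_long_mode1[OF assms(1-9,11) reach] by simp
next
  case False
  then have "j = 1" using assms(10) by simp
  have "ennreal ((1 - exp (- l0 * \<delta> / 2)) * (exp (l1 * \<delta>) - exp (l1 * \<delta> / 2))
      * exp (- l0 * (t0 + \<delta>)) * exp (- l1 * S))
    \<le> ennreal ((exp (l1 * \<delta>) - exp (l1 * \<delta> / 2)) * exp (- l0 * (t0 + \<delta>)) * exp (- l1 * S))"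
    unfolding mult.assoc using assms(3,4,6) by (intro ennreal_leI mult_left_le_one_le) auto
  also have "\<dots> \<le> emeasure exp_seq {e. pdmp_state a b l0 l1 (S + t0) x 1 e \<in> A \<times> {0}}"
    using assms(3,4,6,7,8,11) by (rule pdmp_from_mode1_reaches_after_long_mode1) (rule reach[OF assms(9)])
  finally show ?thesis
    using \<open>j = 1\<close> by simp
qed

section \<open>Unboundedness of the density\<close>

lemma unbounded_nearI:
  assumes "\<And>U C. open U \<Longrightarrow> x \<in> U \<Longrightarrow> 0 \<le> C \<Longrightarrow> AE y in lborel. y \<in> U \<longrightarrow> \<bar>f y\<bar> \<le> C \<Longrightarrow> False"
  shows "unbounded_near f x"
  unfolding unbounded_near_def
proof (intro allI impI notI)
  fix U assume "open U" "x \<in> U" "\<exists>C. AE y in lborel. y \<in> U \<longrightarrow> \<bar>f y\<bar> \<le> C"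
  then obtain C where "AE y in lborel. y \<in> U \<longrightarrow> \<bar>f y\<bar> \<le> C" by blast
  then have "AE y in lborel. y \<in> U \<longrightarrow> \<bar>f y\<bar> \<le> max C 0" by eventually_elim auto
  then show False
    using assms[of U "max C 0"] \<open>open U\<close> \<open>x \<in> U\<close> by simp
qed

lemma unbounded_near_tendsto:
  assumes "(p \<longlongrightarrow> x) F" "\<forall>\<^sub>F t in F. unbounded_near f (p t)" "F \<noteq> bot"
  shows "unbounded_near f x"
proof (rule unbounded_nearI)
  fix U C assume U: "open U" "x \<in> U" and C: "AE y in lborel. y \<in> U \<longrightarrow> \<bar>f y\<bar> \<le> C"
  have "\<forall>\<^sub>F t in F. p t \<in> U \<and> unbounded_near f (p t)"
    using topological_tendstoD[OF assms(1) U] assms(2) by eventually_elim simp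
  then obtain t where "p t \<in> U" "unbounded_near f (p t)"
    using assms(3) eventually_happens by blast
  with U C show False unfolding unbounded_near_def by blast
qed

lemma not_eventually_exp_le_faster_exp:
  fixes k K l l' :: real
  assumes "0 < k" "l < l'"
  shows "\<not> (\<forall>\<^sub>F T in at_top. k * exp (- l * T) \<le> K * exp (- l' * T))"
proof
  assume le: "\<forall>\<^sub>F T in at_top. k * exp (- l * T) \<le> K * exp (- l' * T)"
  have "((\<lambda>T. K * exp (- (l' - l) * T)) \<longlongrightarrow> 0) at_top"
    using assms(2) by real_asymp
  then have "\<forall>\<^sub>F T in at_top. K * exp (- (l' - l) * T) < k"
    using assms(1) by (rule order_tendstoD)
  then have "\<forall>\<^sub>F T in at_top. K * exp (- l' * T) < k * exp (- l * T)"
  proof eventually_elim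
    case (elim T)
    have "K * exp (- l' * T) = K * exp (- (l' - l) * T) * exp (- l * T)"
      by (simp add: algebra_simps flip: exp_add)
    also have "\<dots> < k * exp (- l * T)"
      using elim by simp
    finally show ?case .
  qed
  with le have "\<forall>\<^sub>F T in at_top. k * exp (- l * T) \<le> K * exp (- l' * T) \<and> K * exp (- l' * T) < k * exp (- l * T)"
    by (rule eventually_conj)
  then obtain T where "k * exp (- l * T) \<le> K * exp (- l' * T)" "K * exp (- l' * T) < k * exp (- l * T)"
    using eventually_happens'[OF trivial_limit_at_top_linorder] by blast
  then show False by simp
qed

lemma invariant_density0_rectangle_estimate:
  assumes ab: "0 < b" "b < a" and l: "0 < l0" "0 < l1"
    and inv: "invariant_densities a b l0 l1 \<rho>\<^sub>0 \<rho>\<^sub>1"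
    and bound: "AE y in lborel. y \<in> ball (0, 0) \<epsilon> \<longrightarrow> \<bar>\<rho>\<^sub>0 y\<bar> \<le> C" "0 \<le> C"
    and R: "1 \<le> R" and m: "0 \<le> m"
      "ennreal m \<le> (\<integral>\<^sup>+x. ennreal (\<rho>\<^sub>0 x + \<rho>\<^sub>1 x) * indicator (square R) x \<partial>lborel)"
    and T: "0 \<le> T" "R * exp (- a * T) + R * exp (- b * T) < \<epsilon>"
  shows "(1 - exp (- l1)) * exp (- l0 * (T + 1)) * m
    \<le> C * (4 * (R * exp (- a * T)) * (R * exp (- b * T)))"
proof (rule invariant_densities_mass_transfer[OF inv _ bound _ _ _ _ m(2)])
  let ?rect = "{- (R * exp (- a * T)) .. R * exp (- a * T)} \<times> {- (R * exp (- b * T)) .. R * exp (- b * T)}"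
  show "?rect \<subseteq> ball (0, 0) \<epsilon>"
    using T(2) by (rule centered_rectangle_subset_ball)
  show "emeasure lborel ?rect \<le> ennreal (4 * (R * exp (- a * T)) * (R * exp (- b * T)))"
    using R by (simp add: emeasure_centered_rectangle)
  show "ennreal ((1 - exp (- l1)) * exp (- l0 * (T + 1)))
      \<le> emeasure exp_seq {e. pdmp_state a b l0 l1 (T + 1) x j e \<in> ?rect \<times> {0}}"
    if "x \<in> square R" "j \<in> {0, 1}" for x j
    using ab l R T(1) that by (intro pdmp_reaches_after_long_mode0 flow0_in_centered_rectangle) auto
qed (use T R l m in auto)

lemma invariant_density0_unbounded_near_origin:
  assumes ab: "0 < b" "b < a" and l: "0 < l0" "0 < l1" "l0 < a + b"
    and inv: "invariant_densities a b l0 l1 \<rho>\<^sub>0 \<rho>\<^sub>1"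
  shows "unbounded_near \<rho>\<^sub>0 (0, 0)"
proof (rule unbounded_nearI)
  fix U C assume U: "open U" "(0, 0) \<in> U" and C: "0 \<le> C" "AE y in lborel. y \<in> U \<longrightarrow> \<bar>\<rho>\<^sub>0 y\<bar> \<le> C"
  obtain \<epsilon> where "0 < \<epsilon>" and \<epsilon>: "ball (0, 0) \<epsilon> \<subseteq> U"
    using U open_contains_ball by blast
  have bound: "AE y in lborel. y \<in> ball (0, 0) \<epsilon> \<longrightarrow> \<bar>\<rho>\<^sub>0 y\<bar> \<le> C"
    using C(2) by eventually_elim (use \<epsilon> in auto)
  obtain R m where R: "1 \<le> R" and m: "0 < m"
    "ennreal m \<le> (\<integral>\<^sup>+x. ennreal (\<rho>\<^sub>0 x + \<rho>\<^sub>1 x) * indicator (square R) x \<partial>lborel)"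
    using invariant_densities_mass_in_square[OF inv] by blast
  define k where "k = (1 - exp (- l1)) * exp (- l0) * m"
  have "((\<lambda>T. R * exp (- a * T) + R * exp (- b * T)) \<longlongrightarrow> 0) at_top"
    using ab by real_asymp
  then have "\<forall>\<^sub>F T in at_top. 0 \<le> T \<and> R * exp (- a * T) + R * exp (- b * T) < \<epsilon>"
    using \<open>0 < \<epsilon>\<close> by (intro eventually_conj eventually_ge_at_top order_tendstoD(2))
  then have "\<forall>\<^sub>F T in at_top. k * exp (- l0 * T) \<le> 4 * C * R\<^sup>2 * exp (- (a + b) * T)"
  proof eventually_elim
    case (elim T)
    then have "(1 - exp (- l1)) * exp (- l0 * (T + 1)) * m
        \<le> C * (4 * (R * exp (- a * T)) * (R * exp (- b * T)))"
      using ab l inv bound C(1) R m by (intro invariant_density0_rectangle_estimate) auto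
    then show ?case
      by (simp add: k_def power2_eq_square algebra_simps flip: exp_add)
  qed
  moreover have "0 < k"
    using l m by (simp add: k_def)
  ultimately show False
    using not_eventually_exp_le_faster_exp[of k l0 "a + b"] l(3) by blast
qed

lemma invariant_density0_strip_estimate:
  assumes ab: "0 < b" "b < a" and l: "0 < l0" "0 < l1"
    and inv: "invariant_densities a b l0 l1 \<rho>\<^sub>0 \<rho>\<^sub>1" and "0 \<le> t0"
    and bound: "AE y in lborel. y \<in> ball (flow a b 0 t0 (1, 1)) \<epsilon> \<longrightarrow> \<bar>\<rho>\<^sub>0 y\<bar> \<le> C" "0 \<le> C"
    and R: "1 \<le> R" and m: "0 \<le> m"
      "ennreal m \<le> (\<integral>\<^sup>+x. ennreal (\<rho>\<^sub>0 x + \<rho>\<^sub>1 x) * indicator (square R) x \<partial>lborel)"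
    and \<delta>: "0 < \<delta>" "\<delta> \<le> S" "a * \<delta> \<le> \<epsilon> / 4"
    and \<eta>: "(R + 1) * exp (- b * (S - \<delta>)) \<le> 1 / 2" "(R + 1) * exp (- b * (S - \<delta>)) < \<epsilon> / 4"
  shows "(1 - exp (- l0 * \<delta> / 2)) * (exp (l1 * \<delta>) - exp (l1 * \<delta> / 2)) * exp (- l0 * (t0 + \<delta>))
      * exp (- l1 * S) * m
    \<le> C * (8 * ((R + 1) * exp (- b * (S - \<delta>))))"
proof -
  define \<eta> where "\<eta> = (R + 1) * exp (- b * (S - \<delta>))"
  define A where "A = power_strip (b / a) (2 * \<eta>) \<inter> ball (flow a b 0 t0 (1, 1)) \<epsilon>"
  have "\<eta> \<le> 1 / 2" "\<eta> < \<epsilon> / 4"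
    using \<eta> by (simp_all add: \<eta>_def)
  have reach: "flow a b 0 \<sigma> (flow a b 1 d w) \<in> A"
    if "w \<in> square R" "S - \<delta> \<le> d" "t0 \<le> \<sigma>" "\<sigma> \<le> t0 + \<delta>" for \<sigma> d w
  proof -
    have "(R + 1) * exp (- b * d) \<le> \<eta>"
      using R ab that(2) by (simp add: \<eta>_def)
    then have "flow a b 0 \<sigma> (flow a b 1 d w) \<in> power_strip (b / a) (2 * \<eta>)"
      and "dist (flow a b 0 \<sigma> (flow a b 1 d w)) (flow a b 0 t0 (1, 1)) \<le> 2 * (\<eta> + a * (\<sigma> - t0))"
      using ab \<delta> that(1-3) \<open>0 \<le> t0\<close> \<open>\<eta> \<le> 1 / 2\<close>
      by (intro flow1_flow0_near_boundary_Gamma0; simp)+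
    moreover have "a * (\<sigma> - t0) \<le> a * \<delta>"
      using ab that(4) by (intro mult_left_mono) auto
    ultimately show ?thesis
      using \<delta>(3) \<open>\<eta> < \<epsilon> / 4\<close> unfolding A_def by (simp add: dist_commute)
  qed
  have "emeasure lborel A \<le> emeasure lborel (power_strip (b / a) (2 * \<eta>))"
    by (rule emeasure_mono) (auto simp: A_def)
  also have "\<dots> \<le> ennreal (4 * (2 * \<eta>))"
    using R by (intro emeasure_power_strip) (simp add: \<eta>_def)
  finally have measure_A: "emeasure lborel A \<le> ennreal (8 * \<eta>)"
    by simp
  show ?thesis
    unfolding \<eta>_def[symmetric]
  proof (rule invariant_densities_mass_transfer[OF inv _ bound _ _ _ _ m(2)])
    show "ennreal ((1 - exp (- l0 * \<delta> / 2)) * (exp (l1 * \<delta>) - exp (l1 * \<delta> / 2))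
        * exp (- l0 * (t0 + \<delta>)) * exp (- l1 * S))
      \<le> emeasure exp_seq {e. pdmp_state a b l0 l1 (S + t0) x j e \<in> A \<times> {0}}"
      if "x \<in> square R" "j \<in> {0, 1}" for x j
      using ab l R \<delta> \<open>0 \<le> t0\<close> that reach by (intro pdmp_reaches_after_long_mode1) (auto simp: A_def)
  qed (use measure_A R l m \<open>0 \<le> t0\<close> \<delta> in \<open>auto simp: A_def \<eta>_def\<close>)
qed

lemma invariant_density0_unbounded_near_boundary_Gamma0:
  assumes ab: "0 < b" "b < a" and l: "0 < l0" "0 < l1" "l1 < b"
    and inv: "invariant_densities a b l0 l1 \<rho>\<^sub>0 \<rho>\<^sub>1" and "0 \<le> t0"
  shows "unbounded_near \<rho>\<^sub>0 (flow a b 0 t0 (1, 1))"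
proof (rule unbounded_nearI)
  fix U C assume U: "open U" "flow a b 0 t0 (1, 1) \<in> U"
    and C: "0 \<le> C" "AE y in lborel. y \<in> U \<longrightarrow> \<bar>\<rho>\<^sub>0 y\<bar> \<le> C"
  obtain \<epsilon> where "0 < \<epsilon>" and \<epsilon>: "ball (flow a b 0 t0 (1, 1)) \<epsilon> \<subseteq> U"
    using U open_contains_ball by blast
  have bound: "AE y in lborel. y \<in> ball (flow a b 0 t0 (1, 1)) \<epsilon> \<longrightarrow> \<bar>\<rho>\<^sub>0 y\<bar> \<le> C"
    using C(2) by eventually_elim (use \<epsilon> in auto)
  obtain R m where R: "1 \<le> R" and m: "0 < m"
    "ennreal m \<le> (\<integral>\<^sup>+x. ennreal (\<rho>\<^sub>0 x + \<rho>\<^sub>1 x) * indicator (square R) x \<partial>lborel)"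
    using invariant_densities_mass_in_square[OF inv] by blast
  define \<delta> where "\<delta> = \<epsilon> / (4 * a)"
  have \<delta>: "0 < \<delta>" "a * \<delta> = \<epsilon> / 4"
    using \<open>0 < \<epsilon>\<close> ab by (auto simp: \<delta>_def)
  define k where "k = (1 - exp (- l0 * \<delta> / 2)) * (exp (l1 * \<delta>) - exp (l1 * \<delta> / 2)) * exp (- l0 * (t0 + \<delta>)) * m"
  have "((\<lambda>S. (R + 1) * exp (- b * (S - \<delta>))) \<longlongrightarrow> 0) at_top"
    using ab by real_asymp
  then have "\<forall>\<^sub>F S in at_top. \<delta> \<le> S \<and> (R + 1) * exp (- b * (S - \<delta>)) < min (1 / 2) (\<epsilon> / 4)"
    using \<open>0 < \<epsilon>\<close> by (intro eventually_conj eventually_ge_at_top order_tendstoD(2)) auto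
  then have "\<forall>\<^sub>F S in at_top. k * exp (- l1 * S) \<le> 8 * C * (R + 1) * exp (b * \<delta>) * exp (- b * S)"
  proof eventually_elim
    case (elim S)
    then have "(1 - exp (- l0 * \<delta> / 2)) * (exp (l1 * \<delta>) - exp (l1 * \<delta> / 2)) * exp (- l0 * (t0 + \<delta>))
        * exp (- l1 * S) * m \<le> C * (8 * ((R + 1) * exp (- b * (S - \<delta>))))"
      using ab l inv \<open>0 \<le> t0\<close> bound C(1) R m \<delta> by (intro invariant_density0_strip_estimate) auto
    then have "k * exp (- l1 * S) \<le> C * (8 * ((R + 1) * exp (- b * (S - \<delta>))))"
      by (simp add: k_def mult_ac)
    also have "\<dots> = 8 * C * (R + 1) * exp (b * \<delta>) * exp (- b * S)"
      using exp_add[of "b * \<delta>" "- b * S"] by (simp add: algebra_simps)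
    finally show ?case .
  qed
  moreover have "0 < k"
    using l m \<delta> by (simp add: k_def)
  ultimately show False
    using not_eventually_exp_le_faster_exp[of k l1 b] l(3) by blast
qed

lemma tendsto_boundary_Gamma0_at_top:
  assumes "0 < b" "0 < a"
  shows "((\<lambda>t. flow a b 0 t (1, 1)) \<longlongrightarrow> (0, 0)) at_top"
  unfolding flow_def using assms by (simp, intro tendsto_Pair; real_asymp)

lemma tendsto_boundary_Gamma0_at_right_0:
  shows "((\<lambda>t. flow a b 0 t (1, 1)) \<longlongrightarrow> (1, 1)) (at_right 0)"
  unfolding flow_def by (simp, intro tendsto_Pair; real_asymp)

theorem theorem3p2:
  fixes \<alpha> \<beta> l0 l1 :: real and \<rho>\<^sub>0 \<rho>\<^sub>1 :: "real \<times> real \<Rightarrow> real"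
  assumes "0 < \<beta>" and "\<beta> < \<alpha>" and "0 < l0" and "0 < l1"
    and "invariant_densities \<alpha> \<beta> l0 l1 \<rho>\<^sub>0 \<rho>\<^sub>1"
  shows "(l0 < \<alpha> + \<beta> \<longrightarrow> unbounded_near \<rho>\<^sub>0 (0, 0))
       \<and> (l1 < \<beta> \<longrightarrow> (\<forall>x\<in>boundary_Gamma0 \<alpha> \<beta>. unbounded_near \<rho>\<^sub>0 x)
                        \<and> unbounded_near \<rho>\<^sub>0 (0, 0) \<and> unbounded_near \<rho>\<^sub>0 (1, 1))"
proof (intro conjI impI)
  show "unbounded_near \<rho>\<^sub>0 (0, 0)" if "l0 < \<alpha> + \<beta>"
    using assms that by (intro invariant_density0_unbounded_near_origin)
next
  assume "l1 < \<beta>"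
  then have boundary: "unbounded_near \<rho>\<^sub>0 (flow \<alpha> \<beta> 0 t (1, 1))" if "0 \<le> t" for t
    using assms that by (intro invariant_density0_unbounded_near_boundary_Gamma0)
  then show "\<forall>x\<in>boundary_Gamma0 \<alpha> \<beta>. unbounded_near \<rho>\<^sub>0 x"
    by (auto simp: boundary_Gamma0_def)
  have "((\<lambda>t. flow \<alpha> \<beta> 0 t (1, 1)) \<longlongrightarrow> (0, 0)) at_top"
    using assms(1,2) by (intro tendsto_boundary_Gamma0_at_top) auto
  then show "unbounded_near \<rho>\<^sub>0 (0, 0)"
    by (rule unbounded_near_tendsto) (auto intro: boundary eventually_mono[OF eventually_ge_at_top])
  have "\<forall>\<^sub>F t in at_right 0. unbounded_near \<rho>\<^sub>0 (flow \<alpha> \<beta> 0 t (1, 1))"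
    using eventually_at_right_less[of "0 :: real"] by eventually_elim (auto intro: boundary)
  with tendsto_boundary_Gamma0_at_right_0 show "unbounded_near \<rho>\<^sub>0 (1, 1)"
    by (rule unbounded_near_tendsto) simp
qed

end
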